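(* Let $\bar A_t=\frac1{t+1}\sum_{k=0}^tr_k$ be the running average of the observed rewards, $\hat V_t=\bar A_t/(1-\gamma)$, and $\bar V=\pi^TV$ the mean of the true value function. Let $t_0$ be the largest integer satisfying $t_0\le2\tau^{\rm mix}\big(\frac1{2(t_0+1)}\big)$. Then for all $t>t_0$, $$E\big[(\hat V_t-\bar V)^2\big]\le O\!\left(\frac{r_{\max}^2\,\tau^{\rm mix}\big(\frac1{2(t+1)}\big)}{(1-\gamma)^2\,t}\right),$$ where the implied constant is absolute.
   Context: Setting: finite state space $\mathcal S=[n]$, finite action set, fixed policy $\mu$ inducing an irreducible aperiodic transition matrix $P$ with stationary distribution $\pi$; rewards deterministic with $|r(s,a,s')|\le r_{\max}$; discount $\gamma\in(0,1)$. The true value function $V\in\mathbb{R}^n$ is $V(s)=E_{\mu,s}[\sum_{t\ge0}\gamma^tr_{t+1}]$, equivalently $V=(I-\gamma P)^{-1}R$ with $R(s)=\sum_{s'}\sum_a\mu(s,a)P(s'|s,a)r(s,a,s')$. Mixing: there are $m>0$, $\rho\in(0,1)$ with $\sup_sd_{TV}(P^t(s,\cdot),\pi)\le m\rho^t$ for all $t\ge0$; $\tau^{\rm mix}(\epsilon)=\min\{t\in\mathbb N,t\ge1:m\rho^t\le\epsilon\}$. Observations: a single trajectory with $s_0\sim\pi$, $a_t\sim\mu(s_t,\cdot)$, $s_{t+1}$ from the MDP transition, $r_t=r(s_t,a_t,s_{t+1})$. *)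

theory Defs
  imports "HOL-Analysis.Analysis"
begin

(* States are {..<n} (i.e. [n] shifted to start at 0), actions are {..<na}.
   All functions are only meaningful on these index ranges. *)

definition stoch_policy :: "nat \<Rightarrow> nat \<Rightarrow> (nat \<Rightarrow> nat \<Rightarrow> real) \<Rightarrow> bool" where
  "stoch_policy n na \<mu> \<longleftrightarrow>
     (\<forall>s<n. (\<forall>a<na. \<mu> s a \<ge> 0) \<and> (\<Sum>a<na. \<mu> s a) = 1)"

definition trans_kernel :: "nat \<Rightarrow> nat \<Rightarrow> (nat \<Rightarrow> nat \<Rightarrow> nat \<Rightarrow> real) \<Rightarrow> bool" where
  "trans_kernel n na Pk \<longleftrightarrow>
     (\<forall>s<n. \<forall>a<na. (\<forall>s'<n. Pk s a s' \<ge> 0) \<and> (\<Sum>s'<n. Pk s a s') = 1)"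

definition induced_P :: "nat \<Rightarrow> (nat \<Rightarrow> nat \<Rightarrow> real) \<Rightarrow> (nat \<Rightarrow> nat \<Rightarrow> nat \<Rightarrow> real) \<Rightarrow> nat \<Rightarrow> nat \<Rightarrow> real" where
  "induced_P na \<mu> Pk s s' = (\<Sum>a<na. \<mu> s a * Pk s a s')"

fun Ppow :: "nat \<Rightarrow> (nat \<Rightarrow> nat \<Rightarrow> real) \<Rightarrow> nat \<Rightarrow> nat \<Rightarrow> nat \<Rightarrow> real" where
  "Ppow n P 0 i j = (if i = j then 1 else 0)"
| "Ppow n P (Suc k) i j = (\<Sum>u<n. Ppow n P k i u * P u j)"

definition irreducible_chain :: "nat \<Rightarrow> (nat \<Rightarrow> nat \<Rightarrow> real) \<Rightarrow> bool" where
  "irreducible_chain n P \<longleftrightarrow> (\<forall>i<n. \<forall>j<n. \<exists>k. Ppow n P k i j > 0)"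

definition aperiodic_chain :: "nat \<Rightarrow> (nat \<Rightarrow> nat \<Rightarrow> real) \<Rightarrow> bool" where
  "aperiodic_chain n P \<longleftrightarrow> (\<forall>i<n. Gcd {k::nat. k \<ge> 1 \<and> Ppow n P k i i > 0} = 1)"

definition stationary_dist :: "nat \<Rightarrow> (nat \<Rightarrow> nat \<Rightarrow> real) \<Rightarrow> (nat \<Rightarrow> real) \<Rightarrow> bool" where
  "stationary_dist n P \<pi> \<longleftrightarrow>
     (\<forall>j<n. \<pi> j \<ge> 0) \<and> (\<Sum>j<n. \<pi> j) = 1 \<and> (\<forall>j<n. (\<Sum>i<n. \<pi> i * P i j) = \<pi> j)"

definition tv_dist :: "nat \<Rightarrow> (nat \<Rightarrow> real) \<Rightarrow> (nat \<Rightarrow> real) \<Rightarrow> real" where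
  "tv_dist n p q = (1/2) * (\<Sum>j<n. \<bar>p j - q j\<bar>)"

definition tau_mix :: "real \<Rightarrow> real \<Rightarrow> real \<Rightarrow> nat" where
  "tau_mix m \<rho> \<epsilon> = (LEAST t::nat. t \<ge> 1 \<and> m * \<rho> ^ t \<le> \<epsilon>)"

definition t0_mix :: "real \<Rightarrow> real \<Rightarrow> nat" where
  "t0_mix m \<rho> = (GREATEST t::nat. real t \<le> 2 * real (tau_mix m \<rho> (1 / (2 * (real t + 1)))))"

definition exp_reward :: "nat \<Rightarrow> nat \<Rightarrow> (nat \<Rightarrow> nat \<Rightarrow> real) \<Rightarrow> (nat \<Rightarrow> nat \<Rightarrow> nat \<Rightarrow> real)
    \<Rightarrow> (nat \<Rightarrow> nat \<Rightarrow> nat \<Rightarrow> real) \<Rightarrow> nat \<Rightarrow> real" where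
  "exp_reward n na \<mu> Pk r s = (\<Sum>s'<n. \<Sum>a<na. \<mu> s a * Pk s a s' * r s a s')"

(* V(s) = E_{mu,s}[ sum_t gamma^t r_{t+1} ] = sum_k gamma^k (P^k R)(s) *)
definition value_fn :: "nat \<Rightarrow> nat \<Rightarrow> (nat \<Rightarrow> nat \<Rightarrow> real) \<Rightarrow> (nat \<Rightarrow> nat \<Rightarrow> nat \<Rightarrow> real)
    \<Rightarrow> (nat \<Rightarrow> nat \<Rightarrow> nat \<Rightarrow> real) \<Rightarrow> real \<Rightarrow> nat \<Rightarrow> real" where
  "value_fn n na \<mu> Pk r \<gamma> s =
     (\<Sum>k. \<gamma> ^ k * (\<Sum>s'<n. Ppow n (induced_P na \<mu> Pk) k s s' * exp_reward n na \<mu> Pk r s'))"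

(* probability of the trajectory prefix s_0 a_0 s_1 ... a_t s_{t+1}
   (ss = [s_0,...,s_{t+1}], as = [a_0,...,a_t]) with s_0 ~ pi *)
definition traj_weight :: "(nat \<Rightarrow> real) \<Rightarrow> (nat \<Rightarrow> nat \<Rightarrow> real) \<Rightarrow> (nat \<Rightarrow> nat \<Rightarrow> nat \<Rightarrow> real)
    \<Rightarrow> nat \<Rightarrow> nat list \<Rightarrow> nat list \<Rightarrow> real" where
  "traj_weight \<pi> \<mu> Pk t ss as =
     \<pi> (ss ! 0) * (\<Prod>k<t+1. \<mu> (ss ! k) (as ! k) * Pk (ss ! k) (as ! k) (ss ! (k+1)))"

definition traj_expect :: "nat \<Rightarrow> nat \<Rightarrow> (nat \<Rightarrow> real) \<Rightarrow> (nat \<Rightarrow> nat \<Rightarrow> real) \<Rightarrow> (nat \<Rightarrow> nat \<Rightarrow> nat \<Rightarrow> real)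
    \<Rightarrow> nat \<Rightarrow> (nat list \<Rightarrow> nat list \<Rightarrow> real) \<Rightarrow> real" where
  "traj_expect n na \<pi> \<mu> Pk t f =
     (\<Sum>(ss, as) \<in> {ss. length ss = t + 2 \<and> set ss \<subseteq> {..<n}} \<times> {as. length as = t + 1 \<and> set as \<subseteq> {..<na}}.
        traj_weight \<pi> \<mu> Pk t ss as * f ss as)"

definition avg_reward :: "(nat \<Rightarrow> nat \<Rightarrow> nat \<Rightarrow> real) \<Rightarrow> nat \<Rightarrow> nat list \<Rightarrow> nat list \<Rightarrow> real" where
  "avg_reward r t ss as = (1 / (real t + 1)) * (\<Sum>k\<le>t. r (ss ! k) (as ! k) (ss ! (k+1)))"

end

theory Submission
  imports Defs
begin

text \<open>
  Let Rbar = \<Sum>_s \<pi>(s) R(s) and let X_j = r_j - Rbar be the centred rewards. Stationarity of \<pi>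
  gives Vbar = Rbar / (1 - \<gamma>), so Vhat_t - Vbar = (\<Sum>_{j\<le>t} X_j) / ((t + 1)(1 - \<gamma>)) and the mean
  squared error is a double sum of the covariances E[X_j X_k]. For j < k, conditioning on the
  trajectory up to s_{j+1} turns E[X_j X_k] into E[X_j (P^{k-j-1}(R - Rbar))(s_{j+1})], and
  |P^d(R - Rbar)(s)| \<le> 2 rmax d_TV(P^d(s,\<cdot>), \<pi>) \<le> 2 rmax m \<rho>^d. With \<tau> = \<tau>^mix(1/(2(t + 1))),
  the at most (t + 1)(2\<tau> + 1) pairs with |j - k| \<le> \<tau> contribute at most 4 rmax^2 each, and every
  other pair at most 4 rmax^2 / (2(t + 1)); in total E[(Vhat_t - Vbar)^2] \<le> 16 rmax^2 \<tau> / ((1 - \<gamma>)^2 t).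
\<close>

lemma sum_lists_length_Suc:
  assumes "finite A"
  shows "(\<Sum>xs\<in>{xs. length xs = Suc k \<and> set xs \<subseteq> A}. f xs)
       = (\<Sum>xs\<in>{xs. length xs = k \<and> set xs \<subseteq> A}. \<Sum>x\<in>A. f (xs @ [x]))"
proof -
  let ?L = "{xs. length xs = k \<and> set xs \<subseteq> A}"
  let ?snoc = "\<lambda>p::'a list \<times> 'a. fst p @ [snd p]"
  have "?snoc ` (?L \<times> A) = {xs. length xs = Suc k \<and> set xs \<subseteq> A}"
  proof (intro set_eqI iffI)
    fix xs assume xs: "xs \<in> {xs. length xs = Suc k \<and> set xs \<subseteq> A}"
    then have "xs \<noteq> []" by auto
    with xs have "xs = ?snoc (butlast xs, last xs)" "(butlast xs, last xs) \<in> ?L \<times> A"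
      by (auto dest: in_set_butlastD)
    then show "xs \<in> ?snoc ` (?L \<times> A)" by blast
  qed auto
  moreover have "inj_on ?snoc (?L \<times> A)" by (auto simp: inj_on_def)
  ultimately have "(\<Sum>xs\<in>{xs. length xs = Suc k \<and> set xs \<subseteq> A}. f xs) = (\<Sum>p\<in>?L \<times> A. f (?snoc p))"
    by (metis (no_types, lifting) sum.reindex_cong)
  then show ?thesis by (simp add: sum.cartesian_product case_prod_beta)
qed

lemma sum_lists_length_0: "(\<Sum>xs\<in>{xs. length xs = 0 \<and> set xs \<subseteq> A}. f xs) = f []"
proof -
  have "{xs. length xs = 0 \<and> set xs \<subseteq> A} = {[]}" by auto
  then show ?thesis by simp
qed

lemma traj_weight_snoc:
  assumes "length ss = t + 2" "length as = t + 1"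
  shows "traj_weight \<pi> \<mu> Pk (Suc t) (ss @ [s']) (as @ [a])
       = traj_weight \<pi> \<mu> Pk t ss as * (\<mu> (ss ! Suc t) a * Pk (ss ! Suc t) a s')"
proof -
  have "(\<Prod>k<t+1. \<mu> ((ss@[s']) ! k) ((as@[a]) ! k) * Pk ((ss@[s']) ! k) ((as@[a]) ! k) ((ss@[s']) ! (k+1)))
      = (\<Prod>k<t+1. \<mu> (ss ! k) (as ! k) * Pk (ss ! k) (as ! k) (ss ! (k+1)))"
    using assms by (intro prod.cong) (auto simp: nth_append)
  then show ?thesis using assms unfolding traj_weight_def by (simp add: nth_append mult_ac)
qed

lemma sum_mult_assoc:
  fixes a :: "'a \<Rightarrow> 'c::semiring_0"
  shows "(\<Sum>v\<in>B. (\<Sum>u\<in>A. a u * b u v) * c v) = (\<Sum>u\<in>A. a u * (\<Sum>v\<in>B. b u v * c v))"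
  unfolding sum_distrib_left sum_distrib_right mult.assoc by (rule sum.swap)

lemma tau_mix_spec:
  assumes "m > 0" "0 < \<rho>" "\<rho> < 1" "\<epsilon> > 0"
  shows "tau_mix m \<rho> \<epsilon> \<ge> 1" "m * \<rho> ^ tau_mix m \<rho> \<epsilon> \<le> \<epsilon>"
proof -
  obtain N where "\<rho> ^ N < \<epsilon> / m" using real_arch_pow_inv[of "\<epsilon> / m" \<rho>] assms by auto
  then have "m * \<rho> ^ N < \<epsilon>" using assms by (simp add: field_simps)
  moreover have "m * \<rho> ^ Suc N \<le> m * \<rho> ^ N" using assms by (intro mult_left_mono power_decreasing) auto
  ultimately have "\<exists>t::nat. t \<ge> 1 \<and> m * \<rho> ^ t \<le> \<epsilon>" by (intro exI[of _ "Suc N"]) auto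
  then have "tau_mix m \<rho> \<epsilon> \<ge> 1 \<and> m * \<rho> ^ tau_mix m \<rho> \<epsilon> \<le> \<epsilon>"
    unfolding tau_mix_def by (rule LeastI_ex)
  then show "tau_mix m \<rho> \<epsilon> \<ge> 1" "m * \<rho> ^ tau_mix m \<rho> \<epsilon> \<le> \<epsilon>" by auto
qed

lemma sum_near_diagonal_le:
  fixes \<epsilon> :: real
  assumes "\<epsilon> \<ge> 0"
  shows "(\<Sum>k\<le>t. if j \<le> k + \<tau> \<and> k \<le> j + \<tau> then 1 else \<epsilon>) \<le> real (2 * \<tau> + 1) + (real t + 1) * \<epsilon>"
proof -
  let ?S = "{j - \<tau>..j + \<tau>}"
  have "(\<Sum>k\<le>t. if j \<le> k + \<tau> \<and> k \<le> j + \<tau> then 1 else \<epsilon>) \<le> (\<Sum>k\<le>t. of_bool (k \<in> ?S) + \<epsilon>)"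
    using assms by (intro sum_mono) auto
  also have "\<dots> = real (card ({..t} \<inter> ?S)) + (real t + 1) * \<epsilon>"
    by (simp add: sum.distrib Int_def)
  also have "card ({..t} \<inter> ?S) \<le> card ?S" by (intro card_mono) auto
  finally show ?thesis by simp
qed

locale policy_chain =
  fixes n na :: nat and \<pi> :: "nat \<Rightarrow> real" and \<mu> :: "nat \<Rightarrow> nat \<Rightarrow> real"
    and Pk :: "nat \<Rightarrow> nat \<Rightarrow> nat \<Rightarrow> real"
  assumes policy: "stoch_policy n na \<mu>" and kernel: "trans_kernel n na Pk"
    and stationary: "stationary_dist n (induced_P na \<mu> Pk) \<pi>"
begin

abbreviation "P \<equiv> induced_P na \<mu> Pk"
abbreviation "E \<equiv> traj_expect n na \<pi> \<mu> Pk"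

lemma policy_nonneg: "s < n \<Longrightarrow> a < na \<Longrightarrow> \<mu> s a \<ge> 0"
  using policy unfolding stoch_policy_def by auto

lemma policy_sum: "s < n \<Longrightarrow> (\<Sum>a<na. \<mu> s a) = 1"
  using policy unfolding stoch_policy_def by auto

lemma kernel_nonneg: "s < n \<Longrightarrow> a < na \<Longrightarrow> s' < n \<Longrightarrow> Pk s a s' \<ge> 0"
  using kernel unfolding trans_kernel_def by auto

lemma kernel_sum: "s < n \<Longrightarrow> a < na \<Longrightarrow> (\<Sum>s'<n. Pk s a s') = 1"
  using kernel unfolding trans_kernel_def by auto

lemma stationary_nonneg: "j < n \<Longrightarrow> \<pi> j \<ge> 0"
  using stationary unfolding stationary_dist_def by auto

lemma stationary_sum: "(\<Sum>j<n. \<pi> j) = 1"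
  using stationary unfolding stationary_dist_def by auto

lemma stationary_fixed: "j < n \<Longrightarrow> (\<Sum>i<n. \<pi> i * P i j) = \<pi> j"
  using stationary unfolding stationary_dist_def by auto

lemma step_sum: "s < n \<Longrightarrow> (\<Sum>a<na. \<Sum>s'<n. \<mu> s a * Pk s a s') = 1"
  by (simp add: sum_distrib_left[symmetric] kernel_sum policy_sum)

lemma step_sum_eq_P: "(\<Sum>a<na. \<Sum>s'<n. \<mu> s a * Pk s a s' * g s') = (\<Sum>s'<n. P s s' * g s')"
  unfolding induced_P_def by (simp add: sum_distrib_right sum.swap[of _ "{..<na}"])

lemma P_nonneg: "i < n \<Longrightarrow> j < n \<Longrightarrow> P i j \<ge> 0"
  unfolding induced_P_def by (auto intro!: sum_nonneg mult_nonneg_nonneg policy_nonneg kernel_nonneg)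

lemma P_row_sum: "i < n \<Longrightarrow> (\<Sum>j<n. P i j) = 1"
  using step_sum_eq_P[of i "\<lambda>_. 1"] step_sum[of i] by simp

lemma Ppow_nonneg: "j < n \<Longrightarrow> Ppow n P k i j \<ge> 0"
  by (induction k arbitrary: j) (auto intro!: sum_nonneg mult_nonneg_nonneg P_nonneg)

lemma Ppow_row_sum: "i < n \<Longrightarrow> (\<Sum>j<n. Ppow n P k i j) = 1"
proof (induction k)
  case (Suc k)
  have "(\<Sum>j<n. Ppow n P (Suc k) i j) = (\<Sum>u<n. Ppow n P k i u * (\<Sum>j<n. P u j))"
    using sum_mult_assoc[where a = "Ppow n P k i" and b = P and c = "\<lambda>_. 1"] by simp
  then show ?case using Suc by (simp add: P_row_sum)
qed simp

lemma Ppow_Suc_left: "i < n \<Longrightarrow> j < n \<Longrightarrow> Ppow n P (Suc k) i j = (\<Sum>u<n. P i u * Ppow n P k u j)"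
proof (induction k arbitrary: j)
  case 0
  then show ?case by (simp add: of_bool_def[symmetric])
next
  case (Suc k)
  have "Ppow n P (Suc (Suc k)) i j = (\<Sum>v<n. (\<Sum>u<n. P i u * Ppow n P k u v) * P v j)"
    using Suc by (simp del: Ppow.simps(2) add: Ppow.simps(2)[of n P "Suc k"])
  also have "\<dots> = (\<Sum>u<n. P i u * (\<Sum>v<n. Ppow n P k u v * P v j))"
    by (rule sum_mult_assoc)
  finally show ?case by simp
qed

lemma stationary_Ppow: "j < n \<Longrightarrow> (\<Sum>i<n. \<pi> i * Ppow n P k i j) = \<pi> j"
proof (induction k arbitrary: j)
  case 0
  then show ?case by (simp add: of_bool_def[symmetric])
next
  case (Suc k)
  have "(\<Sum>i<n. \<pi> i * Ppow n P (Suc k) i j) = (\<Sum>u<n. (\<Sum>i<n. \<pi> i * Ppow n P k i u) * P u j)"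
    by (simp add: sum_mult_assoc)
  also have "\<dots> = (\<Sum>u<n. \<pi> u * P u j)" using Suc by (intro sum.cong refl) auto
  finally show ?case using stationary_fixed Suc by simp
qed

lemma E_nested_sum: "E t f = (\<Sum>ss\<in>{ss. length ss = Suc (Suc t) \<and> set ss \<subseteq> {..<n}}.
     \<Sum>as\<in>{as. length as = Suc t \<and> set as \<subseteq> {..<na}}. traj_weight \<pi> \<mu> Pk t ss as * f ss as)"
  unfolding traj_expect_def by (simp add: sum.cartesian_product)

lemma E_cong:
  assumes "\<And>ss as. length ss = Suc (Suc t) \<Longrightarrow> set ss \<subseteq> {..<n} \<Longrightarrow> length as = Suc t
     \<Longrightarrow> set as \<subseteq> {..<na} \<Longrightarrow> f ss as = g ss as"
  shows "E t f = E t g"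
  unfolding E_nested_sum using assms by (intro sum.cong refl) auto

lemma E_sum: "E t (\<lambda>ss as. \<Sum>i\<in>I. f i ss as) = (\<Sum>i\<in>I. E t (f i))"
  unfolding traj_expect_def by (simp add: sum_distrib_left case_prod_beta sum.swap[of _ I])

lemma E_cmult: "E t (\<lambda>ss as. c * f ss as) = c * E t f"
  unfolding traj_expect_def by (simp add: sum_distrib_left case_prod_beta mult_ac)

lemma E_Suc: "E (Suc t) f = E t (\<lambda>ss as. \<Sum>a<na. \<Sum>s'<n.
     \<mu> (ss ! Suc t) a * Pk (ss ! Suc t) a s' * f (ss @ [s']) (as @ [a]))"
proof -
  have "E (Suc t) f = (\<Sum>ss\<in>{ss. length ss = Suc (Suc t) \<and> set ss \<subseteq> {..<n}}. \<Sum>s'<n.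
       \<Sum>as\<in>{as. length as = Suc t \<and> set as \<subseteq> {..<na}}. \<Sum>a<na.
       traj_weight \<pi> \<mu> Pk (Suc t) (ss @ [s']) (as @ [a]) * f (ss @ [s']) (as @ [a]))"
    unfolding E_nested_sum by (simp only: sum_lists_length_Suc[OF finite_lessThan])
  also have "\<dots> = (\<Sum>ss\<in>{ss. length ss = Suc (Suc t) \<and> set ss \<subseteq> {..<n}}. \<Sum>s'<n.
       \<Sum>as\<in>{as. length as = Suc t \<and> set as \<subseteq> {..<na}}. \<Sum>a<na.
       traj_weight \<pi> \<mu> Pk t ss as * (\<mu> (ss ! Suc t) a * Pk (ss ! Suc t) a s' * f (ss @ [s']) (as @ [a])))"
    by (intro sum.cong refl) (simp add: traj_weight_snoc mult.assoc)
  also have "\<dots> = (\<Sum>ss\<in>{ss. length ss = Suc (Suc t) \<and> set ss \<subseteq> {..<n}}.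
       \<Sum>as\<in>{as. length as = Suc t \<and> set as \<subseteq> {..<na}}. \<Sum>a<na. \<Sum>s'<n.
       traj_weight \<pi> \<mu> Pk t ss as * (\<mu> (ss ! Suc t) a * Pk (ss ! Suc t) a s' * f (ss @ [s']) (as @ [a])))"
    by (rule sum.cong[OF refl], rule trans[OF sum.swap], rule sum.cong[OF refl], rule sum.swap)
  finally show ?thesis
    unfolding E_nested_sum by (simp add: sum_distrib_left)
qed

lemma traj_weight_nonneg:
  assumes "length ss = Suc (Suc t)" "set ss \<subseteq> {..<n}" "length as = Suc t" "set as \<subseteq> {..<na}"
  shows "traj_weight \<pi> \<mu> Pk t ss as \<ge> 0"
proof -
  have "ss ! k < n" if "k < Suc (Suc t)" for k using that assms by (metis lessThan_iff nth_mem subsetD)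
  moreover have "as ! k < na" if "k < Suc t" for k using that assms by (metis lessThan_iff nth_mem subsetD)
  ultimately show ?thesis unfolding traj_weight_def
    by (auto intro!: mult_nonneg_nonneg prod_nonneg stationary_nonneg policy_nonneg kernel_nonneg)
qed

lemma E_extend:
  assumes "\<And>ss as s' a. Suc (Suc k) \<le> length ss \<Longrightarrow> Suc k \<le> length as
      \<Longrightarrow> F (ss @ [s']) (as @ [a]) = F ss as"
  shows "E (k + d) F = E k F"
proof (induction d)
  case (Suc d)
  have "E (Suc (k + d)) F = E (k + d) F"
    unfolding E_Suc
  proof (rule E_cong)
    fix ss as :: "nat list"
    assume "length ss = Suc (Suc (k + d))" "set ss \<subseteq> {..<n}" "length as = Suc (k + d)"
    moreover from this have "ss ! Suc (k + d) < n" by (metis lessI nth_mem subsetD lessThan_iff)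
    ultimately show "(\<Sum>a<na. \<Sum>s'<n. \<mu> (ss ! Suc (k + d)) a * Pk (ss ! Suc (k + d)) a s' * F (ss @ [s']) (as @ [a]))
        = F ss as"
      using assms by (simp add: sum_distrib_right[symmetric] step_sum)
  qed
  then show ?case using Suc by simp
qed simp

lemma E_const_1: "E t (\<lambda>_ _. 1) = 1"
proof -
  have "E t (\<lambda>_ _. 1) = E 0 (\<lambda>_ _. 1)"
    using E_extend[of 0 "\<lambda>_ _. 1" t] by simp
  also have "\<dots> = (\<Sum>x<n. \<pi> x * (\<Sum>a<na. \<Sum>y<n. \<mu> x a * Pk x a y))"
    unfolding E_nested_sum
    by (simp only: sum_lists_length_Suc[OF finite_lessThan] sum_lists_length_0)
      (simp add: traj_weight_def sum_distrib_left sum.swap[of _ "{..<n}" "{..<na}"])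
  also have "\<dots> = 1" by (simp add: step_sum stationary_sum)
  finally show ?thesis .
qed

lemma abs_E_le:
  assumes "\<And>ss as. length ss = Suc (Suc t) \<Longrightarrow> set ss \<subseteq> {..<n} \<Longrightarrow> length as = Suc t
     \<Longrightarrow> set as \<subseteq> {..<na} \<Longrightarrow> \<bar>f ss as\<bar> \<le> B"
  shows "\<bar>E t f\<bar> \<le> B"
proof -
  let ?S = "{ss. length ss = Suc (Suc t) \<and> set ss \<subseteq> {..<n}}"
  let ?A = "{as. length as = Suc t \<and> set as \<subseteq> {..<na}}"
  have "\<bar>E t f\<bar> \<le> (\<Sum>ss\<in>?S. \<Sum>as\<in>?A. \<bar>traj_weight \<pi> \<mu> Pk t ss as * f ss as\<bar>)"
    unfolding E_nested_sum by (rule order_trans[OF sum_abs]) (intro sum_mono sum_abs)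
  also have "\<dots> \<le> (\<Sum>ss\<in>?S. \<Sum>as\<in>?A. traj_weight \<pi> \<mu> Pk t ss as * B)"
    using assms traj_weight_nonneg by (intro sum_mono) (auto simp: abs_mult intro!: mult_left_mono)
  also have "\<dots> = B * E t (\<lambda>_ _. 1)"
    unfolding E_nested_sum by (simp add: sum_distrib_left sum_distrib_right mult_ac)
  finally show ?thesis using E_const_1 by simp
qed

end

locale reward_chain = policy_chain +
  fixes r :: "nat \<Rightarrow> nat \<Rightarrow> nat \<Rightarrow> real" and rmax :: real
  assumes reward_bounded: "\<And>s a s'. s < n \<Longrightarrow> a < na \<Longrightarrow> s' < n \<Longrightarrow> \<bar>r s a s'\<bar> \<le> rmax"
    and rmax_nonneg: "rmax \<ge> 0"
begin

abbreviation "R \<equiv> exp_reward n na \<mu> Pk r"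

definition mean_reward :: real where
  "mean_reward = (\<Sum>s<n. \<pi> s * R s)"

definition centred_reward :: "nat \<Rightarrow> nat list \<Rightarrow> nat list \<Rightarrow> real" where
  "centred_reward j ss as = r (ss ! j) (as ! j) (ss ! (j + 1)) - mean_reward"

definition centred_reward_ahead :: "nat \<Rightarrow> nat \<Rightarrow> real" where
  "centred_reward_ahead d s = (\<Sum>s'<n. Ppow n P d s s' * (R s' - mean_reward))"

lemma exp_reward_eq: "R s = (\<Sum>a<na. \<Sum>s'<n. \<mu> s a * Pk s a s' * r s a s')"
  unfolding exp_reward_def by (rule sum.swap)

lemma abs_exp_reward_le: "s < n \<Longrightarrow> \<bar>R s\<bar> \<le> rmax"
proof -
  assume s: "s < n"
  have "\<bar>R s\<bar> \<le> (\<Sum>a<na. \<Sum>s'<n. \<bar>\<mu> s a * Pk s a s' * r s a s'\<bar>)"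
    unfolding exp_reward_eq by (rule order_trans[OF sum_abs]) (intro sum_mono sum_abs)
  also have "\<dots> \<le> (\<Sum>a<na. \<Sum>s'<n. \<mu> s a * Pk s a s' * rmax)"
    using s by (intro sum_mono)
      (auto simp: abs_mult policy_nonneg kernel_nonneg intro!: mult_left_mono reward_bounded)
  also have "\<dots> = rmax * (\<Sum>a<na. \<Sum>s'<n. \<mu> s a * Pk s a s')"
    by (simp add: sum_distrib_left mult_ac)
  finally show ?thesis using s step_sum by simp
qed

lemma abs_sum_Ppow_exp_reward_le: "s < n \<Longrightarrow> \<bar>\<Sum>s'<n. Ppow n P k s s' * R s'\<bar> \<le> rmax"
proof -
  assume s: "s < n"
  have "\<bar>\<Sum>s'<n. Ppow n P k s s' * R s'\<bar> \<le> (\<Sum>s'<n. Ppow n P k s s' * rmax)"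
    by (rule order_trans[OF sum_abs], intro sum_mono)
      (auto simp: abs_mult Ppow_nonneg intro!: mult_left_mono abs_exp_reward_le)
  also have "\<dots> = rmax" using s by (simp add: sum_distrib_right[symmetric] Ppow_row_sum)
  finally show ?thesis .
qed

lemma abs_mean_reward_le: "\<bar>mean_reward\<bar> \<le> rmax"
proof -
  have "\<bar>mean_reward\<bar> \<le> (\<Sum>s<n. \<pi> s * rmax)"
    unfolding mean_reward_def by (rule order_trans[OF sum_abs], intro sum_mono)
      (auto simp: abs_mult stationary_nonneg intro!: mult_left_mono abs_exp_reward_le)
  then show ?thesis by (simp add: sum_distrib_right[symmetric] stationary_sum)
qed

lemma mean_value_fn:
  assumes "0 < \<gamma>" "\<gamma> < 1"
  shows "(\<Sum>s<n. \<pi> s * value_fn n na \<mu> Pk r \<gamma> s) = mean_reward / (1 - \<gamma>)"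
proof -
  define A where "A k s = (\<Sum>s'<n. Ppow n P k s s' * R s')" for k s
  have summable: "summable (\<lambda>k. \<gamma> ^ k * A k s)" if "s < n" for s
  proof (rule summable_comparison_test')
    show "summable (\<lambda>k. rmax * \<gamma> ^ k)" using assms by (intro summable_mult summable_geometric) auto
    show "norm (\<gamma> ^ k * A k s) \<le> rmax * \<gamma> ^ k" for k
      using abs_sum_Ppow_exp_reward_le[OF that, of k] assms
      unfolding A_def by (simp add: abs_mult mult.commute mult_left_mono)
  qed
  have mean_A: "(\<Sum>s<n. \<pi> s * A k s) = mean_reward" for k
  proof -
    have "(\<Sum>s<n. \<pi> s * A k s) = (\<Sum>s'<n. (\<Sum>s<n. \<pi> s * Ppow n P k s s') * R s')"
      unfolding A_def by (simp add: sum_mult_assoc)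
    then show ?thesis unfolding mean_reward_def by (simp add: stationary_Ppow)
  qed
  have "(\<Sum>s<n. \<pi> s * value_fn n na \<mu> Pk r \<gamma> s) = (\<Sum>s<n. \<Sum>k. \<pi> s * (\<gamma> ^ k * A k s))"
    unfolding value_fn_def A_def[symmetric] using summable by (intro sum.cong refl) (simp add: suminf_mult)
  also have "\<dots> = (\<Sum>k. \<Sum>s<n. \<pi> s * (\<gamma> ^ k * A k s))"
    using summable by (intro suminf_sum[symmetric] summable_mult) auto
  also have "\<dots> = (\<Sum>k. mean_reward * \<gamma> ^ k)"
  proof (intro arg_cong[where f = suminf] ext)
    fix k
    have "(\<Sum>s<n. \<pi> s * (\<gamma> ^ k * A k s)) = \<gamma> ^ k * (\<Sum>s<n. \<pi> s * A k s)"
      by (simp add: sum_distrib_left mult.left_commute)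
    then show "(\<Sum>s<n. \<pi> s * (\<gamma> ^ k * A k s)) = mean_reward * \<gamma> ^ k"
      by (simp add: mean_A)
  qed
  also have "\<dots> = mean_reward / (1 - \<gamma>)"
    using assms by (simp add: suminf_mult summable_geometric suminf_geometric)
  finally show ?thesis .
qed

lemma centred_reward_ahead_0: "s < n \<Longrightarrow> centred_reward_ahead 0 s = R s - mean_reward"
  unfolding centred_reward_ahead_def by (simp add: of_bool_def[symmetric])

lemma step_sum_centred_reward:
  "s < n \<Longrightarrow> (\<Sum>a<na. \<Sum>s'<n. \<mu> s a * Pk s a s' * (r s a s' - mean_reward)) = centred_reward_ahead 0 s"
  using step_sum[of s]
  by (simp add: centred_reward_ahead_0 exp_reward_eq right_diff_distrib sum_subtractf sum_distrib_right[symmetric])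

lemma centred_reward_ahead_Suc:
  "s < n \<Longrightarrow> (\<Sum>s'<n. P s s' * centred_reward_ahead d s') = centred_reward_ahead (Suc d) s"
proof -
  assume s: "s < n"
  have "centred_reward_ahead (Suc d) s = (\<Sum>v<n. (\<Sum>u<n. P s u * Ppow n P d u v) * (R v - mean_reward))"
    unfolding centred_reward_ahead_def using s by (intro sum.cong refl) (simp del: Ppow.simps add: Ppow_Suc_left)
  also have "\<dots> = (\<Sum>s'<n. P s s' * centred_reward_ahead d s')"
    unfolding centred_reward_ahead_def by (rule sum_mult_assoc)
  finally show ?thesis by simp
qed

text \<open>Rows of P^d sum to 1, so (P^d R)(s) - Rbar = \<Sum>_s' (P^d(s, s') - \<pi>(s')) R(s').\<close>

lemma abs_centred_reward_ahead_le_tv: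
  assumes "s < n" "tv_dist n (Ppow n P d s) \<pi> \<le> M"
  shows "\<bar>centred_reward_ahead d s\<bar> \<le> 2 * rmax * M"
proof -
  have "centred_reward_ahead d s = (\<Sum>s'<n. Ppow n P d s s' * R s') - mean_reward * (\<Sum>s'<n. Ppow n P d s s')"
    unfolding centred_reward_ahead_def by (simp add: right_diff_distrib sum_subtractf sum_distrib_left mult_ac)
  also have "\<dots> = (\<Sum>s'<n. (Ppow n P d s s' - \<pi> s') * R s')"
    using assms by (simp add: Ppow_row_sum mean_reward_def left_diff_distrib sum_subtractf)
  finally have "\<bar>centred_reward_ahead d s\<bar> \<le> (\<Sum>s'<n. \<bar>Ppow n P d s s' - \<pi> s'\<bar> * rmax)"
    by (auto simp: abs_mult intro!: order_trans[OF sum_abs] sum_mono mult_left_mono abs_exp_reward_le)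
  also have "\<dots> = rmax * (2 * tv_dist n (Ppow n P d s) \<pi>)"
    unfolding tv_dist_def by (simp add: sum_distrib_left mult_ac)
  also have "\<dots> \<le> rmax * (2 * M)" using assms rmax_nonneg by (intro mult_left_mono) auto
  finally show ?thesis by simp
qed

lemma centred_reward_snoc:
  "Suc j < length ss \<Longrightarrow> j < length as \<Longrightarrow> centred_reward j (ss @ [s']) (as @ [a]) = centred_reward j ss as"
  unfolding centred_reward_def by (simp add: nth_append)

lemma abs_centred_reward_le:
  assumes "j < length as" "length ss = Suc (length as)" "set ss \<subseteq> {..<n}" "set as \<subseteq> {..<na}"
  shows "\<bar>centred_reward j ss as\<bar> \<le> 2 * rmax"
proof -
  have "ss ! j < n" "as ! j < na" "ss ! Suc j < n"
    using assms by (metis Suc_mono lessThan_iff less_SucI nth_mem subsetD)+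
  then have "\<bar>r (ss ! j) (as ! j) (ss ! Suc j)\<bar> \<le> rmax" by (rule reward_bounded)
  then show ?thesis unfolding centred_reward_def using abs_mean_reward_le by auto
qed

lemma E_centred_reward_condition_last:
  "E (Suc (j + e)) (\<lambda>ss as. centred_reward j ss as * centred_reward (Suc (j + e)) ss as)
 = E (j + e) (\<lambda>ss as. centred_reward j ss as * centred_reward_ahead 0 (ss ! (j + e + 1)))"
  unfolding E_Suc
proof (rule E_cong)
  fix ss as :: "nat list"
  let ?s = "ss ! Suc (j + e)"
  assume h: "length ss = Suc (Suc (j + e))" "set ss \<subseteq> {..<n}" "length as = Suc (j + e)"
  then have s: "?s < n" by (metis lessI nth_mem subsetD lessThan_iff)
  have "(\<Sum>a<na. \<Sum>s'<n. \<mu> ?s a * Pk ?s a s' *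
           (centred_reward j (ss @ [s']) (as @ [a]) * centred_reward (Suc (j + e)) (ss @ [s']) (as @ [a])))
      = (\<Sum>a<na. \<Sum>s'<n. centred_reward j ss as * (\<mu> ?s a * Pk ?s a s' * (r ?s a s' - mean_reward)))"
    using h by (intro sum.cong refl)
      (simp add: centred_reward_snoc nth_append centred_reward_def[of "Suc (j + e)"])
  also have "\<dots> = centred_reward j ss as * centred_reward_ahead 0 ?s"
    using s by (simp add: sum_distrib_left[symmetric] step_sum_centred_reward)
  finally show "(\<Sum>a<na. \<Sum>s'<n. \<mu> ?s a * Pk ?s a s' *
           (centred_reward j (ss @ [s']) (as @ [a]) * centred_reward (Suc (j + e)) (ss @ [s']) (as @ [a])))
      = centred_reward j ss as * centred_reward_ahead 0 (ss ! (j + e + 1))" by simp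
qed

lemma E_centred_reward_ahead_shift:
  "E (j + e) (\<lambda>ss as. centred_reward j ss as * centred_reward_ahead d (ss ! (j + e + 1)))
 = E j (\<lambda>ss as. centred_reward j ss as * centred_reward_ahead (d + e) (ss ! (j + 1)))"
proof (induction e arbitrary: d)
  case (Suc e)
  have "E (Suc (j + e)) (\<lambda>ss as. centred_reward j ss as * centred_reward_ahead d (ss ! (j + Suc e + 1)))
      = E (j + e) (\<lambda>ss as. centred_reward j ss as * centred_reward_ahead (Suc d) (ss ! (j + e + 1)))"
    unfolding E_Suc
  proof (rule E_cong)
    fix ss as :: "nat list"
    let ?s = "ss ! Suc (j + e)"
    assume h: "length ss = Suc (Suc (j + e))" "set ss \<subseteq> {..<n}" "length as = Suc (j + e)"
    then have s: "?s < n" by (metis lessI nth_mem subsetD lessThan_iff)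
    have "(\<Sum>a<na. \<Sum>s'<n. \<mu> ?s a * Pk ?s a s' *
             (centred_reward j (ss @ [s']) (as @ [a]) * centred_reward_ahead d ((ss @ [s']) ! (j + Suc e + 1))))
        = centred_reward j ss as * (\<Sum>a<na. \<Sum>s'<n. \<mu> ?s a * Pk ?s a s' * centred_reward_ahead d s')"
      using h by (simp add: centred_reward_snoc nth_append sum_distrib_left mult_ac)
    also have "\<dots> = centred_reward j ss as * centred_reward_ahead (Suc d) (ss ! (j + e + 1))"
      using s by (simp add: step_sum_eq_P centred_reward_ahead_Suc)
    finally show "(\<Sum>a<na. \<Sum>s'<n. \<mu> ?s a * Pk ?s a s' *
             (centred_reward j (ss @ [s']) (as @ [a]) * centred_reward_ahead d ((ss @ [s']) ! (j + Suc e + 1))))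
        = centred_reward j ss as * centred_reward_ahead (Suc d) (ss ! (j + e + 1))" .
  qed
  then show ?case using Suc[of "Suc d"] by simp
qed simp

lemma E_centred_reward_product:
  assumes "j < k" "k \<le> t"
  shows "E t (\<lambda>ss as. centred_reward j ss as * centred_reward k ss as)
       = E j (\<lambda>ss as. centred_reward j ss as * centred_reward_ahead (k - j - 1) (ss ! (j + 1)))"
proof -
  obtain e where k: "k = Suc (j + e)" using assms by (metis add_Suc_right less_iff_Suc_add)
  obtain d where t: "t = k + d" using assms by (metis le_add_diff_inverse)
  have "E t (\<lambda>ss as. centred_reward j ss as * centred_reward k ss as)
      = E k (\<lambda>ss as. centred_reward j ss as * centred_reward k ss as)"
    unfolding t using assms by (intro E_extend) (simp add: centred_reward_snoc)
  also have "\<dots> = E (j + e) (\<lambda>ss as. centred_reward j ss as * centred_reward_ahead 0 (ss ! (j + e + 1)))"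
    unfolding k by (rule E_centred_reward_condition_last)
  also have "\<dots> = E j (\<lambda>ss as. centred_reward j ss as * centred_reward_ahead (0 + e) (ss ! (j + 1)))"
    by (rule E_centred_reward_ahead_shift)
  finally show ?thesis using k by simp
qed

lemma abs_E_centred_reward_product_le_tv:
  assumes "j < k" "k \<le> t" "\<And>s. s < n \<Longrightarrow> tv_dist n (Ppow n P (k - j - 1) s) \<pi> \<le> M"
  shows "\<bar>E t (\<lambda>ss as. centred_reward j ss as * centred_reward k ss as)\<bar> \<le> 4 * rmax\<^sup>2 * M"
  unfolding E_centred_reward_product[OF assms(1,2)]
proof (rule abs_E_le)
  fix ss as :: "nat list"
  assume h: "length ss = Suc (Suc j)" "set ss \<subseteq> {..<n}" "length as = Suc j" "set as \<subseteq> {..<na}"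
  then have "ss ! (j + 1) < n" by (metis Suc_eq_plus1 lessI nth_mem subsetD lessThan_iff)
  then have "\<bar>centred_reward_ahead (k - j - 1) (ss ! (j + 1))\<bar> \<le> 2 * rmax * M"
    using assms(3) by (intro abs_centred_reward_ahead_le_tv)
  moreover have "\<bar>centred_reward j ss as\<bar> \<le> 2 * rmax" using h by (intro abs_centred_reward_le) auto
  ultimately have "\<bar>centred_reward j ss as * centred_reward_ahead (k - j - 1) (ss ! (j + 1))\<bar>
      \<le> 2 * rmax * (2 * rmax * M)"
    unfolding abs_mult using rmax_nonneg by (intro mult_mono) auto
  then show "\<bar>centred_reward j ss as * centred_reward_ahead (k - j - 1) (ss ! (j + 1))\<bar> \<le> 4 * rmax\<^sup>2 * M"
    by (simp add: power2_eq_square mult_ac)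
qed

lemma abs_E_centred_reward_product_le:
  assumes "j \<le> t" "k \<le> t"
  shows "\<bar>E t (\<lambda>ss as. centred_reward j ss as * centred_reward k ss as)\<bar> \<le> 4 * rmax\<^sup>2"
proof (rule abs_E_le)
  fix ss as :: "nat list"
  assume "length ss = Suc (Suc t)" "set ss \<subseteq> {..<n}" "length as = Suc t" "set as \<subseteq> {..<na}"
  then have "\<bar>centred_reward j ss as\<bar> \<le> 2 * rmax" "\<bar>centred_reward k ss as\<bar> \<le> 2 * rmax"
    using assms by (intro abs_centred_reward_le; simp)+
  then have "\<bar>centred_reward j ss as * centred_reward k ss as\<bar> \<le> (2 * rmax) * (2 * rmax)"
    unfolding abs_mult by (intro mult_mono) auto
  then show "\<bar>centred_reward j ss as * centred_reward k ss as\<bar> \<le> 4 * rmax\<^sup>2"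
    by (simp add: power2_eq_square)
qed

lemma abs_E_centred_reward_product_le_mixing:
  assumes mixing: "\<forall>k. \<forall>s<n. tv_dist n (Ppow n P k s) \<pi> \<le> m * \<rho> ^ k"
    and "m > 0" "0 < \<rho>" "\<rho> < 1" and \<tau>: "m * \<rho> ^ \<tau> \<le> \<epsilon>" and "j \<le> t" "k \<le> t"
  shows "\<bar>E t (\<lambda>ss as. centred_reward j ss as * centred_reward k ss as)\<bar>
         \<le> 4 * rmax\<^sup>2 * (if j \<le> k + \<tau> \<and> k \<le> j + \<tau> then 1 else \<epsilon>)"
proof -
  have far: "\<bar>E t (\<lambda>ss as. centred_reward j' ss as * centred_reward k' ss as)\<bar> \<le> 4 * rmax\<^sup>2 * \<epsilon>"
    if "k' \<le> t" "j' + \<tau> < k'" for j' k'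
  proof (rule abs_E_centred_reward_product_le_tv)
    have "m * \<rho> ^ (k' - j' - 1) \<le> m * \<rho> ^ \<tau>"
      using assms that by (intro mult_left_mono power_decreasing) auto
    then show "tv_dist n (Ppow n P (k' - j' - 1) s) \<pi> \<le> \<epsilon>" if "s < n" for s
      using mixing that \<tau> by (meson order_trans)
  qed (use that in auto)
  show ?thesis
  proof (cases "j \<le> k + \<tau> \<and> k \<le> j + \<tau>")
    case True
    then show ?thesis using abs_E_centred_reward_product_le assms by simp
  next
    case False
    then show ?thesis using far[of k j] far[of j k] assms by (auto simp: mult.commute)
  qed
qed

lemma squared_error_eq:
  assumes "\<gamma> < 1"
  shows "(avg_reward r t ss as / (1 - \<gamma>) - mean_reward / (1 - \<gamma>))\<^sup>2
       = 1 / ((real t + 1)\<^sup>2 * (1 - \<gamma>)\<^sup>2) * (\<Sum>j\<le>t. \<Sum>k\<le>t. centred_reward j ss as * centred_reward k ss as)"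
proof -
  define X where "X = (\<Sum>k\<le>t. centred_reward k ss as)"
  have "(\<Sum>k\<le>t. r (ss ! k) (as ! k) (ss ! (k + 1))) = X + (real t + 1) * mean_reward"
    by (simp add: X_def centred_reward_def sum_subtractf)
  then have "avg_reward r t ss as = X / (real t + 1) + mean_reward"
    unfolding avg_reward_def by (simp add: field_simps)
  then have "avg_reward r t ss as / (1 - \<gamma>) - mean_reward / (1 - \<gamma>) = X / ((real t + 1) * (1 - \<gamma>))"
    by (simp add: add_divide_distrib)
  then show ?thesis by (simp add: X_def power2_eq_square sum_product)
qed

lemma sum_E_centred_reward_products_le:
  assumes mixing: "\<forall>k. \<forall>s<n. tv_dist n (Ppow n P k s) \<pi> \<le> m * \<rho> ^ k"
    and "m > 0" "0 < \<rho>" "\<rho> < 1" "m * \<rho> ^ \<tau> \<le> \<epsilon>" "\<epsilon> \<ge> 0"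
  shows "(\<Sum>j\<le>t. \<Sum>k\<le>t. E t (\<lambda>ss as. centred_reward j ss as * centred_reward k ss as))
      \<le> (real t + 1) * (4 * rmax\<^sup>2 * (real (2 * \<tau> + 1) + (real t + 1) * \<epsilon>))"
proof -
  have "(\<Sum>j\<le>t. \<Sum>k\<le>t. E t (\<lambda>ss as. centred_reward j ss as * centred_reward k ss as))
      \<le> (\<Sum>j\<le>t. 4 * rmax\<^sup>2 * (\<Sum>k\<le>t. if j \<le> k + \<tau> \<and> k \<le> j + \<tau> then 1 else \<epsilon>))"
    unfolding sum_distrib_left using abs_E_centred_reward_product_le_mixing[OF assms(1-5)]
    by (intro sum_mono) (meson abs_le_D1 atMost_iff)
  also have "\<dots> \<le> (\<Sum>j\<le>t. 4 * rmax\<^sup>2 * (real (2 * \<tau> + 1) + (real t + 1) * \<epsilon>))"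
    using assms by (intro sum_mono mult_left_mono sum_near_diagonal_le) auto
  finally show ?thesis by (simp add: add.commute)
qed

lemma mean_squared_error_le:
  assumes mixing: "\<forall>k. \<forall>s<n. tv_dist n (Ppow n P k s) \<pi> \<le> m * \<rho> ^ k"
    and mr: "m > 0" "0 < \<rho>" "\<rho> < 1" and \<gamma>: "0 < \<gamma>" "\<gamma> < 1" and "t \<ge> 1"
  shows "E t (\<lambda>ss as. (avg_reward r t ss as / (1 - \<gamma>) - (\<Sum>s<n. \<pi> s * value_fn n na \<mu> Pk r \<gamma> s))\<^sup>2)
      \<le> 16 * (rmax\<^sup>2 * real (tau_mix m \<rho> (1 / (2 * (real t + 1)))) / ((1 - \<gamma>)\<^sup>2 * real t))"
proof -
  define \<epsilon> where "\<epsilon> = 1 / (2 * (real t + 1))"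
  define \<tau> where "\<tau> = tau_mix m \<rho> \<epsilon>"
  have \<tau>: "\<tau> \<ge> 1" "m * \<rho> ^ \<tau> \<le> \<epsilon>"
    using tau_mix_spec[OF mr] unfolding \<tau>_def \<epsilon>_def by auto
  have \<epsilon>: "\<epsilon> \<ge> 0" "(real t + 1) * \<epsilon> = 1 / 2" unfolding \<epsilon>_def by auto
  have "E t (\<lambda>ss as. (avg_reward r t ss as / (1 - \<gamma>) - (\<Sum>s<n. \<pi> s * value_fn n na \<mu> Pk r \<gamma> s))\<^sup>2)
      = 1 / ((real t + 1)\<^sup>2 * (1 - \<gamma>)\<^sup>2)
        * (\<Sum>j\<le>t. \<Sum>k\<le>t. E t (\<lambda>ss as. centred_reward j ss as * centred_reward k ss as))"
    unfolding mean_value_fn[OF \<gamma>] squared_error_eq[OF \<gamma>(2)] E_cmult E_sum ..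
  also have "\<dots> \<le> 1 / ((real t + 1)\<^sup>2 * (1 - \<gamma>)\<^sup>2) * ((real t + 1) * (4 * rmax\<^sup>2 * (3 / 2 + 2 * real \<tau>)))"
    using sum_E_centred_reward_products_le[OF mixing mr \<tau>(2) \<epsilon>(1), of t] \<epsilon>(2)
    by (intro mult_left_mono) auto
  also have "\<dots> = 4 * rmax\<^sup>2 * (3 / 2 + 2 * real \<tau>) / ((real t + 1) * (1 - \<gamma>)\<^sup>2)"
    using \<gamma> by (simp add: power2_eq_square[of "real t + 1"])
  also have "\<dots> \<le> 4 * rmax\<^sup>2 * (4 * real \<tau>) / (real t * (1 - \<gamma>)\<^sup>2)"
    using \<tau> \<gamma> \<open>t \<ge> 1\<close> by (intro frac_le mult_left_mono mult_right_mono) auto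
  finally show ?thesis unfolding \<tau>_def \<epsilon>_def by (simp add: field_simps)
qed

end

theorem lemma3:
  shows "\<exists>C::real > 0. \<forall>(n::nat) (na::nat) \<mu> Pk r rmax (\<gamma>::real) \<pi> (m::real) (\<rho>::real) (t::nat).
     n \<ge> 1 \<and> na \<ge> 1 \<and> stoch_policy n na \<mu> \<and> trans_kernel n na Pk
     \<and> irreducible_chain n (induced_P na \<mu> Pk) \<and> aperiodic_chain n (induced_P na \<mu> Pk)
     \<and> stationary_dist n (induced_P na \<mu> Pk) \<pi>
     \<and> (\<forall>s<n. \<forall>a<na. \<forall>s'<n. \<bar>r s a s'\<bar> \<le> rmax)
     \<and> 0 < \<gamma> \<and> \<gamma> < 1
     \<and> m > 0 \<and> 0 < \<rho> \<and> \<rho> < 1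
     \<and> (\<forall>k. \<forall>s<n. tv_dist n (Ppow n (induced_P na \<mu> Pk) k s) \<pi> \<le> m * \<rho> ^ k)
     \<and> t > t0_mix m \<rho>
     \<longrightarrow> traj_expect n na \<pi> \<mu> Pk t
           (\<lambda>ss as. (avg_reward r t ss as / (1 - \<gamma>)
                      - (\<Sum>s<n. \<pi> s * value_fn n na \<mu> Pk r \<gamma> s)) ^ 2)
         \<le> C * (rmax ^ 2 * real (tau_mix m \<rho> (1 / (2 * (real t + 1)))) / ((1 - \<gamma>) ^ 2 * real t))"
proof (intro exI[of _ "16::real"] conjI allI impI)
  fix n na :: nat and \<mu> :: "nat \<Rightarrow> nat \<Rightarrow> real" and Pk r :: "nat \<Rightarrow> nat \<Rightarrow> nat \<Rightarrow> real"
    and rmax \<gamma> :: real and \<pi> :: "nat \<Rightarrow> real" and m \<rho> :: real and t :: nat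
  assume H: "n \<ge> 1 \<and> na \<ge> 1 \<and> stoch_policy n na \<mu> \<and> trans_kernel n na Pk
     \<and> irreducible_chain n (induced_P na \<mu> Pk) \<and> aperiodic_chain n (induced_P na \<mu> Pk)
     \<and> stationary_dist n (induced_P na \<mu> Pk) \<pi>
     \<and> (\<forall>s<n. \<forall>a<na. \<forall>s'<n. \<bar>r s a s'\<bar> \<le> rmax)
     \<and> 0 < \<gamma> \<and> \<gamma> < 1
     \<and> m > 0 \<and> 0 < \<rho> \<and> \<rho> < 1
     \<and> (\<forall>k. \<forall>s<n. tv_dist n (Ppow n (induced_P na \<mu> Pk) k s) \<pi> \<le> m * \<rho> ^ k)
     \<and> t > t0_mix m \<rho>"
  then have "\<bar>r 0 0 0\<bar> \<le> rmax" by simp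
  then have "rmax \<ge> 0" by (rule order_trans[OF abs_ge_zero])
  with H interpret reward_chain n na \<pi> \<mu> Pk r rmax
    by unfold_locales auto
  show "traj_expect n na \<pi> \<mu> Pk t
           (\<lambda>ss as. (avg_reward r t ss as / (1 - \<gamma>)
                      - (\<Sum>s<n. \<pi> s * value_fn n na \<mu> Pk r \<gamma> s)) ^ 2)
         \<le> 16 * (rmax ^ 2 * real (tau_mix m \<rho> (1 / (2 * (real t + 1)))) / ((1 - \<gamma>) ^ 2 * real t))"
    using H by (intro mean_squared_error_le) auto
qed simp

end
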